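(* Let $R$ be a ring with unity and involution $*$, and let $a,b,c\in R$ with $a$ left dual $(b,c)$-core invertible. Then for any inner inverse $(cab)^-$ of $cab$ and any $\{1,4\}$-inverse $b^{(1,4)}$ of $b$, the element $b^{(1,4)}b(cab)^-c$ is a left dual $(b,c)$-core inverse of $a$.
   Context: An element $a\in R$ is called left dual $(b,c)$-core invertible if there exists $x\in Rc$ such that $bxab=b$ and $(xab)^*=xab$; such an $x$ is called a left dual $(b,c)$-core inverse of $a$. An inner inverse of $y$ is any $z$ with $yzy=y$. A $\{1,4\}$-inverse of $y$ is any $z$ with $yzy=y$ and $(zy)^*=zy$. *)

theory Defs
  imports Main
begin

class ring_invol = ring_1 +
  fixes invol :: "'a \<Rightarrow> 'a"
  assumes invol_add: "invol (x + y) = invol x + invol y"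
      and invol_mult: "invol (x * y) = invol y * invol x"
      and invol_invol: "invol (invol x) = x"

definition left_dual_bc_core_inverse :: "'a::ring_invol \<Rightarrow> 'a \<Rightarrow> 'a \<Rightarrow> 'a \<Rightarrow> bool" where
  "left_dual_bc_core_inverse a b c x \<longleftrightarrow>
     (\<exists>r. x = r * c) \<and> b * x * a * b = b \<and> invol (x * a * b) = x * a * b"

definition left_dual_bc_core_invertible :: "'a::ring_invol \<Rightarrow> 'a \<Rightarrow> 'a \<Rightarrow> bool" where
  "left_dual_bc_core_invertible a b c \<longleftrightarrow> (\<exists>x. left_dual_bc_core_inverse a b c x)"

definition inner_inverse :: "'a::ring_invol \<Rightarrow> 'a \<Rightarrow> bool" where
  "inner_inverse y z \<longleftrightarrow> y * z * y = y"

definition inverse_14 :: "'a::ring_invol \<Rightarrow> 'a \<Rightarrow> bool" where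
  "inverse_14 y z \<longleftrightarrow> y * z * y = y \<and> invol (z * y) = z * y"

end

theory Submission
  imports Defs
begin

text \<open>If \<open>x = r c\<close> is a left dual \<open>(b,c)\<close>-core inverse of \<open>a\<close>, then \<open>b = (b r)(c a b)\<close> lies in the
  left ideal generated by \<open>c a b\<close>, so every inner inverse \<open>g\<close> of \<open>c a b\<close> satisfies \<open>b g (c a b) = b\<close>.
  Composing with a \<open>{1,4}\<close>-inverse \<open>h\<close> of \<open>b\<close> gives \<open>(h b g c) a b = h b\<close>, which is self-adjoint, and
  \<open>b (h b g c) a b = b g (c a b) = b\<close>.\<close>

lemma inner_inverse_fixes_left_multiple:
  fixes y z s :: "'a::semigroup_mult"
  assumes "y * z * y = y"
  shows "(s * y) * z * y = s * y"
  using assms by (simp add: mult.assoc)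

lemma left_dual_bc_core_inverse_left_multiple:
  assumes "left_dual_bc_core_inverse a b c x"
  obtains s where "b = s * (c * a * b)"
proof -
  from assms obtain r where "x = r * c" and "b * x * a * b = b"
    unfolding left_dual_bc_core_inverse_def by blast
  then have "b = (b * r) * (c * a * b)"
    by (simp add: mult.assoc)
  then show thesis ..
qed

theorem proposition2p7:
  fixes a b c g h :: "'a::ring_invol"
  assumes "left_dual_bc_core_invertible a b c"
      and "inner_inverse (c * a * b) g"
      and "inverse_14 b h"
  shows "left_dual_bc_core_inverse a b c (h * b * g * c)"
proof -
  from assms(1) obtain s where s: "b = s * (c * a * b)"
    unfolding left_dual_bc_core_invertible_def
    by (blast elim: left_dual_bc_core_inverse_left_multiple)
  have bg: "b * g * (c * a * b) = b"
    using inner_inverse_fixes_left_multiple[of "c * a * b" g s] assms(2) s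
    by (simp add: inner_inverse_def)
  have h: "b * h * b = b" "invol (h * b) = h * b"
    using assms(3) by (simp_all add: inverse_14_def)
  have xab: "h * b * g * c * a * b = h * b"
    using bg by (metis mult.assoc)
  have "b * (h * b * g * c) * a * b = b"
    using xab h(1) by (simp add: mult.assoc)
  moreover have "\<exists>r. h * b * g * c = r * c"
    by blast
  ultimately show ?thesis
    unfolding left_dual_bc_core_inverse_def using xab h(2) by simp
qed

end
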